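(* Let $\mathcal{G}=(G;T_1,T_2;\theta)$ and $\mathcal{G}'=(G';T_1',T_2';\theta')$ be symmetric $2$-tree decompositions such that $\mathcal{G}'$ is obtained from $\mathcal{G}$ by a symmetric $2$-tree $0$-extension. If $\mathcal{G}$ has a $\mathcal{C}_s$-realisation $(p,\tau)$ in the plane, then $\mathcal{G}'$ has a $\mathcal{C}_s$-realisation $(p',\tau)$ in the plane with $p'(w)=p(w)$ for all $w\in V(G)$.
   Context: A multi-graph is finite and loop-free, possibly with parallel edges. A $2$-tree decomposition is $(G;T_1,T_2)$ with $G$ a multi-graph and $T_1,T_2$ spanning trees of $G$ whose edge sets partition $E(G)$. Let $\mathbb{Z}_2=\langle s\rangle$. A $\mathbb{Z}_2$-symmetric multi-graph is $(G,\theta)$ with $\theta:\mathbb{Z}_2\to\mathrm{Aut}(G)$ a non-trivial homomorphism; $s_\theta=\theta(s)$, $s_\theta(v_1v_2)=s_\theta(v_1)s_\theta(v_2)$. A symmetric $2$-tree decomposition is $(G;T_1,T_2;\theta)$ with $(G;T_1,T_2)$ a $2$-tree decomposition, $(G,\theta)$ $\mathbb{Z}_2$-symmetric and $s_\theta(T_i)=T_i$. A symmetric $2$-tree $0$-extension produces $(G';T_1',T_2';\theta')$ from $(G;T_1,T_2;\theta)$ by adding two new distinct vertices $v,s_{\theta'}(v)$ with $s_{\theta'}|_{V(G)}=s_\theta$, adding an edge $vv_1$ to $T_1$ and an edge $vv_2$ to $T_2$ for some (not necessarily distinct) $v_1,v_2\in V(G)$, and adding their images $s_{\theta'}(vv_1)$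 to $T_1$ and $s_{\theta'}(vv_2)$ to $T_2$. Realisations: a framework $(G,p)$ in $\mathbb{R}^d$ is a multi-graph $G$ with an injective $p:V(G)\to\mathbb{R}^d$; $\|x\|_\infty=\max_i|x\cdot e_i|$. If $u,w$ are joined by exactly $t\ge1$ edges, $\{p(u),p(w)\}$ is well-positioned if there are exactly $t$ distinct indices $k$ with $\|p(u)-p(w)\|_\infty=|(p(u)-p(w))\cdot e_k|$ (its framework colours); $(G,p)$ is well-positioned if all adjacent pairs are; a framework colouring $\kappa_p$ assigns to the $t$ edges between $u,w$ these $t$ colours bijectively. A realisation of $(G;T_1,\dots,T_d)$ is a well-positioned $(G,p)$ in $\mathbb{R}^d$ with $\kappa_p^{-1}(i)=E(T_i)$ for all $i$, for some framework colouring. A $\mathcal{C}_s$-realisation of a symmetric $2$-tree decomposition $(G;T_1,T_2;\theta)$ is a pair $(p,\tau)$ where $p:V(G)\to\mathbb{R}^2$ is injective, $\tau:\mathbb{Z}_2\to GL(\mathbb{R}^2)$ is a representation with $\tau(s)$ a reflection in a coordinate axis, $\tau(s)(p(v))=p(s_\theta(v))$ for all $v$, and $(G,p)$ is a realisation of $(G;T_1,T_2)$. *)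

theory Defs
  imports "HOL-Analysis.Analysis"
begin

text \<open>A multigraph: vertex set, edge set, and an incidence map sending each edge
  to the (two-element) set of its end vertices.  Parallel edges are distinct edges
  with the same ends.\<close>

record ('v, 'e) mgraph =
  verts :: "'v set"
  edges :: "'e set"
  ends  :: "'e \<Rightarrow> 'v set"

definition multigraph :: "('v, 'e) mgraph \<Rightarrow> bool" where
  "multigraph G \<longleftrightarrow> finite (verts G) \<and> finite (edges G) \<and>
     (\<forall>e\<in>edges G. \<exists>u w. u \<in> verts G \<and> w \<in> verts G \<and> u \<noteq> w \<and> ends G e = {u, w})"

definition is_walk :: "('v, 'e) mgraph \<Rightarrow> 'e set \<Rightarrow> 'v list \<Rightarrow> 'e list \<Rightarrow> bool" where
  "is_walk G F vs es \<longleftrightarrow> length vs = Suc (length es) \<and> set vs \<subseteq> verts G \<and> set es \<subseteq> F \<and>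
     (\<forall>i<length es. ends G (es ! i) = {vs ! i, vs ! Suc i})"

text \<open>Cycle: closed walk of length at least one with pairwise distinct edges and
  pairwise distinct vertices v_1,...,v_k (v_k = v_0).  Two parallel edges form a cycle.\<close>
definition is_cycle :: "('v, 'e) mgraph \<Rightarrow> 'e set \<Rightarrow> 'v list \<Rightarrow> 'e list \<Rightarrow> bool" where
  "is_cycle G F vs es \<longleftrightarrow> is_walk G F vs es \<and> es \<noteq> [] \<and> distinct es \<and>
     hd vs = last vs \<and> distinct (tl vs)"

definition spanning_tree :: "('v, 'e) mgraph \<Rightarrow> 'e set \<Rightarrow> bool" where
  "spanning_tree G F \<longleftrightarrow> F \<subseteq> edges G \<and>
     (\<forall>u\<in>verts G. \<forall>w\<in>verts G. \<exists>vs es. is_walk G F vs es \<and> hd vs = u \<and> last vs = w) \<and>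
     \<not> (\<exists>vs es. is_cycle G F vs es)"

definition two_tree_decomp :: "('v, 'e) mgraph \<Rightarrow> 'e set \<Rightarrow> 'e set \<Rightarrow> bool" where
  "two_tree_decomp G T1 T2 \<longleftrightarrow> multigraph G \<and> spanning_tree G T1 \<and> spanning_tree G T2 \<and>
     T1 \<inter> T2 = {} \<and> T1 \<union> T2 = edges G"

definition graph_aut :: "('v, 'e) mgraph \<Rightarrow> ('v \<Rightarrow> 'v) \<Rightarrow> ('e \<Rightarrow> 'e) \<Rightarrow> bool" where
  "graph_aut G sv se \<longleftrightarrow> bij_betw sv (verts G) (verts G) \<and> bij_betw se (edges G) (edges G) \<and>
     (\<forall>e\<in>edges G. ends G (se e) = sv ` ends G e)"

text \<open>A non-trivial homomorphism theta : Z2 = <s> \<rightarrow> Aut(G) is determined by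
  s_theta = theta(s) = (sv, se), an automorphism with s_theta^2 = id and s_theta \<noteq> id.\<close>
definition Z2_symmetric :: "('v, 'e) mgraph \<Rightarrow> ('v \<Rightarrow> 'v) \<Rightarrow> ('e \<Rightarrow> 'e) \<Rightarrow> bool" where
  "Z2_symmetric G sv se \<longleftrightarrow> multigraph G \<and> graph_aut G sv se \<and>
     (\<forall>v\<in>verts G. sv (sv v) = v) \<and> (\<forall>e\<in>edges G. se (se e) = e) \<and>
     \<not> ((\<forall>v\<in>verts G. sv v = v) \<and> (\<forall>e\<in>edges G. se e = e))"

definition sym_two_tree_decomp ::
  "('v, 'e) mgraph \<Rightarrow> 'e set \<Rightarrow> 'e set \<Rightarrow> ('v \<Rightarrow> 'v) \<Rightarrow> ('e \<Rightarrow> 'e) \<Rightarrow> bool" where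
  "sym_two_tree_decomp G T1 T2 sv se \<longleftrightarrow> two_tree_decomp G T1 T2 \<and> Z2_symmetric G sv se \<and>
     se ` T1 = T1 \<and> se ` T2 = T2"

definition sym_0_extension ::
  "('v, 'e) mgraph \<Rightarrow> 'e set \<Rightarrow> 'e set \<Rightarrow> ('v \<Rightarrow> 'v) \<Rightarrow> ('e \<Rightarrow> 'e) \<Rightarrow>
   ('v, 'e) mgraph \<Rightarrow> 'e set \<Rightarrow> 'e set \<Rightarrow> ('v \<Rightarrow> 'v) \<Rightarrow> ('e \<Rightarrow> 'e) \<Rightarrow> bool" where
  "sym_0_extension G T1 T2 sv se G' T1' T2' sv' se' \<longleftrightarrow>
     (\<exists>v v1 v2 a b.
        v \<notin> verts G \<and> sv' v \<notin> verts G \<and> v \<noteq> sv' v \<and>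
        v1 \<in> verts G \<and> v2 \<in> verts G \<and>
        verts G' = verts G \<union> {v, sv' v} \<and>
        (\<forall>w\<in>verts G. sv' w = sv w) \<and>
        a \<notin> edges G \<and> b \<notin> edges G \<and> a \<noteq> b \<and>
        edges G' = edges G \<union> {a, b, se' a, se' b} \<and>
        (\<forall>e\<in>edges G. ends G' e = ends G e) \<and>
        ends G' a = {v, v1} \<and> ends G' b = {v, v2} \<and>
        T1' = T1 \<union> {a, se' a} \<and> T2' = T2 \<union> {b, se' b})"

definition parallel_edges :: "('v, 'e) mgraph \<Rightarrow> 'v \<Rightarrow> 'v \<Rightarrow> 'e set" where
  "parallel_edges G u w = {e \<in> edges G. ends G e = {u, w}}"

definition framework_colours :: "('v \<Rightarrow> real^2) \<Rightarrow> 'v \<Rightarrow> 'v \<Rightarrow> 2 set" where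
  "framework_colours p u w = {k. infnorm (p u - p w) = \<bar>(p u - p w) $ k\<bar>}"

definition well_positioned :: "('v, 'e) mgraph \<Rightarrow> ('v \<Rightarrow> real^2) \<Rightarrow> bool" where
  "well_positioned G p \<longleftrightarrow> (\<forall>u\<in>verts G. \<forall>w\<in>verts G. parallel_edges G u w \<noteq> {} \<longrightarrow>
      card (framework_colours p u w) = card (parallel_edges G u w))"

definition framework_colouring :: "('v, 'e) mgraph \<Rightarrow> ('v \<Rightarrow> real^2) \<Rightarrow> ('e \<Rightarrow> 2) \<Rightarrow> bool" where
  "framework_colouring G p \<kappa> \<longleftrightarrow> (\<forall>u\<in>verts G. \<forall>w\<in>verts G. parallel_edges G u w \<noteq> {} \<longrightarrow>
      bij_betw \<kappa> (parallel_edges G u w) (framework_colours p u w))"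

definition realisation :: "('v, 'e) mgraph \<Rightarrow> 'e set \<Rightarrow> 'e set \<Rightarrow> ('v \<Rightarrow> real^2) \<Rightarrow> bool" where
  "realisation G T1 T2 p \<longleftrightarrow> inj_on p (verts G) \<and> well_positioned G p \<and>
     (\<exists>\<kappa>. framework_colouring G p \<kappa> \<and>
        {e \<in> edges G. \<kappa> e = 1} = T1 \<and> {e \<in> edges G. \<kappa> e = 2} = T2)"

text \<open>tau(s) is a reflection in a coordinate axis (negates one coordinate).  Since
  such a map is an involution in GL(R^2), it determines the representation tau.\<close>
definition coord_reflection :: "(real^2 \<Rightarrow> real^2) \<Rightarrow> bool" where
  "coord_reflection t \<longleftrightarrow> (\<exists>k::2. t = (\<lambda>x. \<chi> i. if i = k then - (x $ i) else x $ i))"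

definition Cs_realisation ::
  "('v, 'e) mgraph \<Rightarrow> 'e set \<Rightarrow> 'e set \<Rightarrow> ('v \<Rightarrow> 'v) \<Rightarrow> ('v \<Rightarrow> real^2) \<Rightarrow> (real^2 \<Rightarrow> real^2) \<Rightarrow> bool" where
  "Cs_realisation G T1 T2 sv p t \<longleftrightarrow> inj_on p (verts G) \<and> coord_reflection t \<and>
     (\<forall>v\<in>verts G. t (p v) = p (sv v)) \<and> realisation G T1 T2 p"

end

theory Submission
  imports Defs
begin

text \<open>Place the new vertex v at a point q and its mirror s(v) at \<tau>(q). Besides the mirror
  images, the only new adjacencies are v v1 (colour 1) and v v2 (colour 2), so q - p(v1) must
  have dominant first coordinate and q - p(v2) dominant second coordinate, or both coordinates
  equal when v1 = v2. For v1 \<noteq> v2 these two cones meet in a nonempty open set, from which q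
  can be picked off the finitely many coordinate lines that would break injectivity or make q
  a fixed point of \<tau>. The mirrored edges then get the right colours because a coordinate
  reflection preserves which coordinates dominate.\<close>

lemma infnorm_2: fixes x :: "real^2" shows "infnorm x = max \<bar>x$1\<bar> \<bar>x$2\<bar>"
  unfolding infnorm_cart UNIV_2 by (rule cSup_eq) auto

definition dominant_coords :: "real^2 \<Rightarrow> 2 set" where
  "dominant_coords d = {k. infnorm d = \<bar>d $ k\<bar>}"

lemma framework_colours_eq: "framework_colours p u w = dominant_coords (p u - p w)"
  unfolding framework_colours_def dominant_coords_def ..

lemma dominant_coords_1: "\<bar>d$2\<bar> < \<bar>d$1\<bar> \<Longrightarrow> dominant_coords d = {1}"
  unfolding dominant_coords_def infnorm_2 by (auto simp: max_def) (metis exhaust_2 less_irrefl)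

lemma dominant_coords_2: "\<bar>d$1\<bar> < \<bar>d$2\<bar> \<Longrightarrow> dominant_coords d = {2}"
  unfolding dominant_coords_def infnorm_2 by (auto simp: max_def) (metis exhaust_2 less_irrefl)

lemma dominant_coords_12: "\<bar>d$1\<bar> = \<bar>d$2\<bar> \<Longrightarrow> dominant_coords d = {1, 2}"
  unfolding dominant_coords_def infnorm_2 using exhaust_2 by (auto simp: max_def)

lemma dominant_coords_uminus: "dominant_coords (- d) = dominant_coords d"
  unfolding dominant_coords_def by (simp add: infnorm_neg)

lemma framework_colours_commute: "framework_colours p u w = framework_colours p w u"
  by (metis framework_colours_eq dominant_coords_uminus minus_diff_eq)

lemma coord_reflection_nth:
  assumes "coord_reflection t"
  obtains k where "\<And>x i. t x $ i = (if i = k then - (x $ i) else x $ i)"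
  using assms unfolding coord_reflection_def by force

lemma coord_reflection_abs_nth: "coord_reflection t \<Longrightarrow> \<bar>t x $ i\<bar> = \<bar>x $ i\<bar>"
  by (erule coord_reflection_nth) simp

lemma coord_reflection_diff: "coord_reflection t \<Longrightarrow> t (x - y) = t x - t y"
  by (erule coord_reflection_nth) (simp add: vec_eq_iff)

lemma coord_reflection_involution: "coord_reflection t \<Longrightarrow> t (t x) = x"
  by (erule coord_reflection_nth) (simp add: vec_eq_iff)

lemma coord_reflection_fixpoint:
  assumes "coord_reflection t" "t x = x" shows "x$1 = 0 \<or> x$2 = 0"
proof -
  obtain k where k: "\<And>x i. t x $ i = (if i = k then - (x $ i) else x $ i)"
    using coord_reflection_nth[OF assms(1)] by blast
  have "x $ k = 0" using arg_cong[OF assms(2), of "\<lambda>y. y $ k"] by (simp add: k)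
  then show ?thesis using exhaust_2[of k] by auto
qed

lemma dominant_coords_coord_reflection:
  "coord_reflection t \<Longrightarrow> dominant_coords (t d) = dominant_coords d"
  unfolding dominant_coords_def infnorm_2 by (simp add: coord_reflection_abs_nth)

lemma framework_colours_reflect:
  assumes "coord_reflection t" "\<forall>x\<in>V. t (p x) = p (s x)" "u \<in> V" "w \<in> V"
  shows "framework_colours p (s u) (s w) = framework_colours p u w"
  using assms by (metis framework_colours_eq coord_reflection_diff dominant_coords_coord_reflection)

lemma open_contains_point_off_lines:
  fixes S :: "(real^2) set" and F1 F2 :: "real set"
  assumes "open S" "S \<noteq> {}" "finite F1" "finite F2"
  obtains q where "q \<in> S" "q$1 \<notin> F1" "q$2 \<notin> F2"
proof -
  obtain x e where "x \<in> S" "e > 0" and ball: "ball x e \<subseteq> S"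
    using assms(1,2) open_contains_ball by blast
  have off: "\<exists>s. \<bar>s - c\<bar> < r \<and> s \<notin> F" if fin: "finite F" and "r > 0" for c r and F :: "real set"
  proof -
    have "infinite {c - r<..<c + r}" using \<open>r > 0\<close> by simp
    then obtain s where "s \<in> {c - r<..<c + r} - F"
      using Diff_infinite_finite[OF fin] by (metis ex_in_conv finite.emptyI)
    then have "\<bar>s - c\<bar> < r" by (simp add: abs_diff_less_iff)
    with \<open>s \<in> _ - F\<close> show ?thesis by blast
  qed
  have "e / 2 > 0" using \<open>e > 0\<close> by simp
  obtain s1 s2 where s1: "\<bar>s1 - x$1\<bar> < e/2" "s1 \<notin> F1" and s2: "\<bar>s2 - x$2\<bar> < e/2" "s2 \<notin> F2"
    using off[OF assms(3) \<open>e / 2 > 0\<close>] off[OF assms(4) \<open>e / 2 > 0\<close>] by meson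
  define q :: "real^2" where "q = (\<chi> i. if i = 1 then s1 else s2)"
  have "dist q x \<le> \<bar>s1 - x$1\<bar> + \<bar>s2 - x$2\<bar>"
    using norm_le_l1_cart[of "q - x"] by (simp add: dist_norm UNIV_2 q_def)
  then have "q \<in> S" using s1 s2 ball by (auto simp: dist_commute)
  then show ?thesis using s1 s2 that by (simp add: q_def)
qed

lemma exists_point_in_separating_cones:
  fixes P Q :: "real^2"
  assumes "P \<noteq> Q"
  shows "\<exists>q. \<bar>(q - P)$2\<bar> < \<bar>(q - P)$1\<bar> \<and> \<bar>(q - Q)$1\<bar> < \<bar>(q - Q)$2\<bar>"
proof (cases "P$1 = Q$1")
  case True
  then have "P$2 \<noteq> Q$2" using assms by (metis exhaust_2 vec_eq_iff)
  then show ?thesis using True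
    by (intro exI[of _ "vector [P$1 + (Q$2 - P$2) / 2, P$2]"]) (simp add: abs_minus_commute)
next
  case False
  define y where "y = (if P$2 = Q$2 then (Q$1 - P$1) / 2 else 0)"
  show ?thesis using False
    by (intro exI[of _ "vector [Q$1, P$2 + y]"]) (simp add: y_def)
qed

lemma exists_point_separating:
  fixes P Q :: "real^2" and F1 F2 :: "real set"
  assumes "P \<noteq> Q" "finite F1" "finite F2"
  obtains q where "q$1 \<notin> F1" "q$2 \<notin> F2"
    "dominant_coords (q - P) = {1}" "dominant_coords (q - Q) = {2}"
proof -
  let ?S = "{q. \<bar>(q - P)$2\<bar> < \<bar>(q - P)$1\<bar>} \<inter> {q. \<bar>(q - Q)$1\<bar> < \<bar>(q - Q)$2\<bar>}"
  have "open ?S" by (intro open_Int open_Collect_less continuous_intros)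
  moreover have "?S \<noteq> {}" using exists_point_in_separating_cones[OF assms(1)] by blast
  ultimately obtain q where "q \<in> ?S" "q$1 \<notin> F1" "q$2 \<notin> F2"
    using open_contains_point_off_lines assms(2,3) by blast
  then show ?thesis using that dominant_coords_1 dominant_coords_2 by simp
qed

lemma exists_point_diagonal:
  fixes P :: "real^2" and F1 F2 :: "real set"
  assumes "finite F1" "finite F2"
  obtains q where "q$1 \<notin> F1" "q$2 \<notin> F2" "dominant_coords (q - P) = {1, 2}"
proof -
  have "finite ((\<lambda>z. z - P$1) ` F1 \<union> (\<lambda>z. z - P$2) ` F2)" using assms by simp
  then obtain s where "s \<notin> (\<lambda>z. z - P$1) ` F1 \<union> (\<lambda>z. z - P$2) ` F2"
    using ex_new_if_finite[OF infinite_UNIV_char_0] by blast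
  then have "(P + vector [s, s])$1 \<notin> F1" "(P + vector [s, s])$2 \<notin> F2"
    by (auto simp: image_iff)
  moreover have "dominant_coords (P + vector [s, s] - P) = {1, 2}"
    by (rule dominant_coords_12) simp
  ultimately show ?thesis by (rule that)
qed

lemma exists_point_for_extension:
  fixes p :: "'v \<Rightarrow> real^2"
  assumes "finite V" "inj_on p V" "v1 \<in> V" "v2 \<in> V"
  obtains q where "q$1 \<noteq> 0" "q$2 \<noteq> 0" "\<forall>w\<in>V. \<bar>q$1\<bar> \<noteq> \<bar>p w $ 1\<bar>"
    "v1 = v2 \<Longrightarrow> dominant_coords (q - p v1) = {1, 2}"
    "v1 \<noteq> v2 \<Longrightarrow> dominant_coords (q - p v1) = {1}"
    "v1 \<noteq> v2 \<Longrightarrow> dominant_coords (q - p v2) = {2}"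
proof -
  define F1 where "F1 = insert 0 ((\<lambda>w. p w $ 1) ` V \<union> (\<lambda>w. - p w $ 1) ` V)"
  have fin: "finite F1" "finite {0::real}" using assms(1) by (simp_all add: F1_def)
  have off: "q$1 \<noteq> 0 \<and> (\<forall>w\<in>V. \<bar>q$1\<bar> \<noteq> \<bar>p w $ 1\<bar>)" if "q$1 \<notin> F1" for q :: "real^2"
    using that unfolding F1_def by (auto simp: abs_eq_iff)
  show ?thesis
  proof (cases "v1 = v2")
    case True
    obtain q where "q$1 \<notin> F1" "q$2 \<notin> {0}" "dominant_coords (q - p v1) = {1, 2}"
      using exists_point_diagonal[OF fin] by blast
    then show ?thesis using that off True by blast
  next
    case False
    then have "p v1 \<noteq> p v2" using assms(2-4) inj_onD by metis
    then obtain q where "q$1 \<notin> F1" "q$2 \<notin> {0}"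
      "dominant_coords (q - p v1) = {1}" "dominant_coords (q - p v2) = {2}"
      using exists_point_separating[OF _ fin] by blast
    then show ?thesis using that off False by blast
  qed
qed

definition tree_colouring :: "'e set \<Rightarrow> 'e \<Rightarrow> 2" where
  "tree_colouring T e = (if e \<in> T then 1 else 2)"

lemma tree_colouring_invariant:
  assumes "se ` T = T" "se (se e) = e"
  shows "tree_colouring T (se e) = tree_colouring T e"
  using assms by (auto simp: tree_colouring_def) (metis image_eqI)

lemma framework_colouring_imp_well_positioned:
  "framework_colouring G p \<kappa> \<Longrightarrow> well_positioned G p"
  unfolding framework_colouring_def well_positioned_def by (metis bij_betw_same_card)

definition colours_match ::
    "('v, 'e) mgraph \<Rightarrow> ('v \<Rightarrow> real^2) \<Rightarrow> ('e \<Rightarrow> 2) \<Rightarrow> 'v \<Rightarrow> 'v \<Rightarrow> bool" where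
  "colours_match G p \<kappa> u w \<longleftrightarrow> (parallel_edges G u w \<noteq> {} \<longrightarrow>
     bij_betw \<kappa> (parallel_edges G u w) (framework_colours p u w))"

lemma framework_colouring_iff_colours_match:
  "framework_colouring G p \<kappa> \<longleftrightarrow> (\<forall>u\<in>verts G. \<forall>w\<in>verts G. colours_match G p \<kappa> u w)"
  unfolding framework_colouring_def colours_match_def ..

lemma parallel_edges_commute: "parallel_edges G u w = parallel_edges G w u"
  unfolding parallel_edges_def by (simp add: insert_commute)

lemma colours_match_commute: "colours_match G p \<kappa> u w \<longleftrightarrow> colours_match G p \<kappa> w u"
  unfolding colours_match_def by (simp add: parallel_edges_commute framework_colours_commute)

lemma parallel_edges_Z2_image:
  assumes "Z2_symmetric G sv se" "u \<in> verts G" "w \<in> verts G"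
  shows "parallel_edges G (sv u) (sv w) = se ` parallel_edges G u w"
proof -
  have aut: "bij_betw se (edges G) (edges G)" "\<forall>e\<in>edges G. ends G (se e) = sv ` ends G e"
    and inv: "\<forall>v\<in>verts G. sv (sv v) = v" "\<forall>e\<in>edges G. se (se e) = e"
    using assms(1) unfolding Z2_symmetric_def graph_aut_def by auto
  show ?thesis
  proof (intro equalityI subsetI)
    fix e assume "e \<in> parallel_edges G (sv u) (sv w)"
    then have "e \<in> edges G" "ends G e = {sv u, sv w}" unfolding parallel_edges_def by auto
    moreover have "se e \<in> edges G" using aut(1) \<open>e \<in> edges G\<close> bij_betwE by blast
    ultimately have "se e \<in> parallel_edges G u w"
      using aut(2) inv assms(2,3) unfolding parallel_edges_def by auto
    then show "e \<in> se ` parallel_edges G u w" using inv(2) \<open>e \<in> edges G\<close> by (metis image_eqI)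
  next
    fix e assume "e \<in> se ` parallel_edges G u w"
    then show "e \<in> parallel_edges G (sv u) (sv w)"
      using aut unfolding parallel_edges_def by (auto dest: bij_betwE)
  qed
qed

lemma colours_match_Z2_image:
  assumes Z2: "Z2_symmetric G sv se" and t: "coord_reflection t"
    and p: "\<forall>x\<in>verts G. t (p x) = p (sv x)" and \<kappa>: "\<forall>e\<in>edges G. \<kappa> (se e) = \<kappa> e"
    and uw: "u \<in> verts G" "w \<in> verts G" and match: "colours_match G p \<kappa> u w"
  shows "colours_match G p \<kappa> (sv u) (sv w)"
proof -
  let ?P = "parallel_edges G u w"
  have "inj_on se (edges G)" using Z2 unfolding Z2_symmetric_def graph_aut_def bij_betw_def by blast
  then have se: "bij_betw se ?P (se ` ?P)"
    by (rule inj_on_imp_bij_betw[OF inj_on_subset]) (auto simp: parallel_edges_def)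
  have "bij_betw \<kappa> ?P C \<longleftrightarrow> bij_betw (\<kappa> \<circ> se) ?P C" for C
    using \<kappa> by (intro bij_betw_cong) (simp add: parallel_edges_def)
  then have "bij_betw \<kappa> (se ` ?P) C \<longleftrightarrow> bij_betw \<kappa> ?P C" for C
    using bij_betw_comp_iff[OF se] by simp
  then show ?thesis
    using match by (simp add: colours_match_def parallel_edges_Z2_image[OF Z2 uw]
        framework_colours_reflect[OF t p uw])
qed

lemma realisation_imp_tree_colouring:
  assumes "realisation G T1 T2 p"
  shows "framework_colouring G p (tree_colouring T1)"
proof -
  obtain \<kappa> where \<kappa>: "framework_colouring G p \<kappa>" and T1: "{e \<in> edges G. \<kappa> e = 1} = T1"
    using assms unfolding realisation_def by blast
  have "\<kappa> e = tree_colouring T1 e" if "e \<in> edges G" for e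
    using that T1 exhaust_2[of "\<kappa> e"] by (auto simp: tree_colouring_def)
  then have "bij_betw (tree_colouring T1) (parallel_edges G u w) C \<longleftrightarrow>
      bij_betw \<kappa> (parallel_edges G u w) C" for u w C
    by (intro bij_betw_cong) (simp add: parallel_edges_def)
  then show ?thesis using \<kappa> unfolding framework_colouring_def by simp
qed

lemma tree_colouring_imp_realisation:
  assumes "T1 \<inter> T2 = {}" "T1 \<union> T2 = edges G"
    and "inj_on p (verts G)" "framework_colouring G p (tree_colouring T1)"
  shows "realisation G T1 T2 p"
proof -
  have "{e \<in> edges G. tree_colouring T1 e = 1} = T1"
    "{e \<in> edges G. tree_colouring T1 e = 2} = T2"
    using assms(1,2) by (auto simp: tree_colouring_def)
  then show ?thesis
    unfolding realisation_def using assms(3,4) framework_colouring_imp_well_positioned by blast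
qed

locale sym_0_extension_step =
  fixes G G' :: "('v, 'e) mgraph" and T1 T1' T2' :: "'e set"
    and sv sv' :: "'v \<Rightarrow> 'v" and se' :: "'e \<Rightarrow> 'e" and v v1 v2 :: 'v and a b :: 'e
  assumes multigraph_G: "multigraph G"
    and sv_closed: "\<forall>w\<in>verts G. sv w \<in> verts G"
    and Z2_G': "Z2_symmetric G' sv' se'"
    and T1'_T2'_partition: "T1' \<inter> T2' = {}" "T1' \<union> T2' = edges G'"
    and se'_T1': "se' ` T1' = T1'"
    and v_new: "v \<notin> verts G" "sv' v \<notin> verts G" "v \<noteq> sv' v"
    and v1_v2: "v1 \<in> verts G" "v2 \<in> verts G"
    and verts_G': "verts G' = verts G \<union> {v, sv' v}"
    and sv'_sv: "\<forall>w\<in>verts G. sv' w = sv w"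
    and edges_G': "edges G' = edges G \<union> {a, b, se' a, se' b}"
    and ends_old: "\<forall>e\<in>edges G. ends G' e = ends G e"
    and ends_a: "ends G' a = {v, v1}" and ends_b: "ends G' b = {v, v2}"
    and T1': "T1' = T1 \<union> {a, se' a}" and b_T2': "b \<in> T2'"
begin

lemma ends_old_subset: "e \<in> edges G \<Longrightarrow> ends G' e \<subseteq> verts G"
  using multigraph_G ends_old unfolding multigraph_def by fastforce

lemma ends_se'_a: "ends G' (se' a) = {sv' v, sv v1}"
  and ends_se'_b: "ends G' (se' b) = {sv' v, sv v2}"
  using Z2_G' edges_G' ends_a ends_b sv'_sv v1_v2
  unfolding Z2_symmetric_def graph_aut_def by auto

lemma new_edges_not_old: "a \<notin> edges G" "b \<notin> edges G" "se' a \<notin> edges G" "se' b \<notin> edges G"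
  using ends_old_subset ends_a ends_b ends_se'_a ends_se'_b v_new by blast+

lemma parallel_edges_old:
  assumes "u \<in> verts G" "w \<in> verts G"
  shows "parallel_edges G' u w = parallel_edges G u w"
proof -
  have "ends G' e \<noteq> {u, w}" if "e \<in> {a, b, se' a, se' b}" for e
    using that assms ends_a ends_b ends_se'_a ends_se'_b v_new by auto
  then show ?thesis
    unfolding parallel_edges_def using edges_G' ends_old by auto
qed

lemma parallel_edges_at_v: "parallel_edges G' v w = {e \<in> {a, b}. ends G' e = {v, w}}"
proof -
  have "v \<notin> ends G' e" if "e \<in> edges G \<union> {se' a, se' b}" for e
    using that ends_old_subset ends_se'_a ends_se'_b v_new sv_closed v1_v2 by blast
  then show ?thesis
    unfolding parallel_edges_def using edges_G' ends_a ends_b by blast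
qed

lemma tree_colouring_old: "e \<in> edges G \<Longrightarrow> tree_colouring T1' e = tree_colouring T1 e"
  using new_edges_not_old by (auto simp: T1' tree_colouring_def)

lemma tree_colouring_new: "tree_colouring T1' a = 1" "tree_colouring T1' b = 2"
  using T1'_T2'_partition(1) b_T2' by (auto simp: T1' tree_colouring_def)

lemma tree_colouring_se': "e \<in> edges G' \<Longrightarrow> tree_colouring T1' (se' e) = tree_colouring T1' e"
  using Z2_G' se'_T1' tree_colouring_invariant unfolding Z2_symmetric_def by metis

end

lemma sym_0_extension_step_exists:
  assumes "sym_two_tree_decomp G T1 T2 sv se"
    and "sym_two_tree_decomp G' T1' T2' sv' se'"
    and "sym_0_extension G T1 T2 sv se G' T1' T2' sv' se'"
  obtains v v1 v2 a b where "sym_0_extension_step G G' T1 T1' T2' sv sv' se' v v1 v2 a b"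
proof -
  have "multigraph G" "\<forall>w\<in>verts G. sv w \<in> verts G"
    using assms(1) unfolding sym_two_tree_decomp_def two_tree_decomp_def Z2_symmetric_def
      graph_aut_def by (auto dest: bij_betwE)
  moreover have "Z2_symmetric G' sv' se'" "T1' \<inter> T2' = {}" "T1' \<union> T2' = edges G'" "se' ` T1' = T1'"
    using assms(2) unfolding sym_two_tree_decomp_def two_tree_decomp_def by auto
  ultimately show ?thesis
    using assms(3) that unfolding sym_0_extension_def sym_0_extension_step_def by blast
qed

text \<open>The conditions on q: since the first coordinate of \<tau>(q) is \<plusminus>q$1, neither q nor \<tau>(q)
  is an old point, and nonzero coordinates make \<tau>(q) \<noteq> q.\<close>

locale sym_0_extension_realisation = sym_0_extension_step +
  fixes p :: "'v \<Rightarrow> real^2" and t :: "real^2 \<Rightarrow> real^2" and q :: "real^2"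
  assumes inj_p: "inj_on p (verts G)"
    and colouring_p: "framework_colouring G p (tree_colouring T1)"
    and reflection_t: "coord_reflection t"
    and p_symmetric: "\<forall>w\<in>verts G. t (p w) = p (sv w)"
    and q_nonzero: "q$1 \<noteq> 0" "q$2 \<noteq> 0"
    and q_off_images: "\<forall>w\<in>verts G. \<bar>q$1\<bar> \<noteq> \<bar>p w $ 1\<bar>"
    and q_colours_equal: "v1 = v2 \<Longrightarrow> dominant_coords (q - p v1) = {1, 2}"
    and q_colours_distinct: "v1 \<noteq> v2 \<Longrightarrow> dominant_coords (q - p v1) = {1}"
      "v1 \<noteq> v2 \<Longrightarrow> dominant_coords (q - p v2) = {2}"
begin

definition p' :: "'v \<Rightarrow> real^2" where "p' = p(v := q, sv' v := t q)"

lemma p'_old: "w \<in> verts G \<Longrightarrow> p' w = p w"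
  using v_new by (auto simp: p'_def)

lemma p'_new: "p' v = q" "p' (sv' v) = t q"
  using v_new(3) by (auto simp: p'_def)

lemma q_new: "q \<notin> p ` verts G" "t q \<notin> p ` verts G" "t q \<noteq> q"
proof -
  have "\<bar>t q $ 1\<bar> = \<bar>q $ 1\<bar>" by (rule coord_reflection_abs_nth[OF reflection_t])
  then show "q \<notin> p ` verts G" "t q \<notin> p ` verts G"
    using q_off_images by force+
  show "t q \<noteq> q" using coord_reflection_fixpoint[OF reflection_t] q_nonzero by blast
qed

lemma inj_on_p': "inj_on p' (verts G')"
proof -
  have "inj_on p' (verts G)" using inj_p p'_old inj_on_cong by metis
  moreover have img: "p' ` verts G = p ` verts G" using p'_old by (simp cong: image_cong)
  moreover have "verts G - {sv' v} = verts G" using v_new(2) by blast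
  ultimately have "inj_on p' (insert (sv' v) (verts G))"
    using q_new(2) by (simp add: p'_new)
  moreover have "p' ` (insert (sv' v) (verts G) - {v}) \<subseteq> insert (t q) (p ` verts G)"
    using img p'_new(2) by blast
  ultimately have "inj_on p' (insert v (insert (sv' v) (verts G)))"
    using q_new(1,3) by (auto simp: p'_new)
  then show ?thesis by (simp add: verts_G')
qed

lemma p'_symmetric: "\<forall>w\<in>verts G'. t (p' w) = p' (sv' w)"
proof
  fix w assume "w \<in> verts G'"
  then consider "w \<in> verts G" | "w = v" | "w = sv' v" by (auto simp: verts_G')
  then show "t (p' w) = p' (sv' w)"
  proof cases
    case 1
    then show ?thesis using p_symmetric sv'_sv sv_closed by (simp add: p'_old)
  next
    case 2
    then show ?thesis by (simp add: p'_new)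
  next
    case 3
    have "sv' (sv' v) = v" using Z2_G' verts_G' unfolding Z2_symmetric_def by auto
    then show ?thesis
      using 3 coord_reflection_involution[OF reflection_t] by (simp add: p'_new)
  qed
qed

lemma colours_match_old:
  assumes "u \<in> verts G" "w \<in> verts G"
  shows "colours_match G' p' (tree_colouring T1') u w"
proof -
  have "bij_betw (tree_colouring T1') (parallel_edges G u w) C \<longleftrightarrow>
      bij_betw (tree_colouring T1) (parallel_edges G u w) C" for C
    by (intro bij_betw_cong) (simp add: parallel_edges_def tree_colouring_old)
  moreover have "framework_colours p' u w = framework_colours p u w"
    using assms by (simp add: framework_colours_def p'_old)
  ultimately show ?thesis
    using colouring_p assms unfolding framework_colouring_iff_colours_match
    by (simp add: colours_match_def parallel_edges_old)
qed

lemma colours_match_at_v: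
  assumes "w \<in> verts G'"
  shows "colours_match G' p' (tree_colouring T1') v w"
proof -
  have a_ne_b: "a \<noteq> b" using T1'_T2'_partition(1) b_T2' T1' by blast
  have v_ne: "v \<noteq> v1" "v \<noteq> v2" using v_new v1_v2 by auto
  have colours: "framework_colours p' v w = dominant_coords (q - p w)" if "w \<in> verts G"
    using that by (simp add: framework_colours_eq p'_new p'_old)
  have match: "colours_match G' p' (tree_colouring T1') v w"
    if "parallel_edges G' v w = P" "framework_colours p' v w = C"
      "bij_betw (tree_colouring T1') P C" for P C
    using that by (simp add: colours_match_def)
  consider "w = v1" "v1 = v2" | "w = v1" "v1 \<noteq> v2" | "w = v2" "v1 \<noteq> v2" | "w \<noteq> v1" "w \<noteq> v2"
    by blast
  then show ?thesis
  proof cases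
    case 1
    have "parallel_edges G' v w = {a, b}"
      using 1 by (auto simp: parallel_edges_at_v ends_a ends_b)
    moreover have "framework_colours p' v w = {1, 2}"
      using 1 v1_v2 colours q_colours_equal by simp
    moreover have "bij_betw (tree_colouring T1') {a, b} {1, 2}"
      using a_ne_b tree_colouring_new by (auto simp: bij_betw_def)
    ultimately show ?thesis by (rule match)
  next
    case 2
    have "parallel_edges G' v w = {a}"
      using 2 v_ne by (auto simp: parallel_edges_at_v ends_a ends_b doubleton_eq_iff)
    moreover have "framework_colours p' v w = {1}"
      using 2 v1_v2 colours q_colours_distinct by simp
    moreover have "bij_betw (tree_colouring T1') {a} {1}"
      using tree_colouring_new by (simp add: bij_betw_def)
    ultimately show ?thesis by (rule match)
  next
    case 3
    have "parallel_edges G' v w = {b}"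
      using 3 v_ne by (auto simp: parallel_edges_at_v ends_a ends_b doubleton_eq_iff)
    moreover have "framework_colours p' v w = {2}"
      using 3 v1_v2 colours q_colours_distinct by simp
    moreover have "bij_betw (tree_colouring T1') {b} {2}"
      using tree_colouring_new by (simp add: bij_betw_def)
    ultimately show ?thesis by (rule match)
  next
    case 4
    then have "parallel_edges G' v w = {}"
      using v_ne by (auto simp: parallel_edges_at_v ends_a ends_b doubleton_eq_iff)
    then show ?thesis by (simp add: colours_match_def)
  qed
qed

lemma framework_colouring_p': "framework_colouring G' p' (tree_colouring T1')"
  unfolding framework_colouring_iff_colours_match
proof (intro ballI)
  fix u w assume uw: "u \<in> verts G'" "w \<in> verts G'"
  have at_v: "colours_match G' p' (tree_colouring T1') x y"
    if "x \<in> verts G'" "y \<in> verts G'" "v = x \<or> v = y" for x y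
    using that colours_match_at_v colours_match_commute by metis
  consider "u \<in> verts G" "w \<in> verts G" | "v = u \<or> v = w" | "sv' v = u \<or> sv' v = w"
    using uw verts_G' by blast
  then show "colours_match G' p' (tree_colouring T1') u w"
  proof cases
    case 1
    then show ?thesis by (rule colours_match_old)
  next
    case 2
    then show ?thesis using at_v uw by blast
  next
    case 3
    \<comment> \<open>the pair is the mirror image of a pair at v\<close>
    have sv': "sv' x \<in> verts G'" "sv' (sv' x) = x" if "x \<in> verts G'" for x
      using that Z2_G' unfolding Z2_symmetric_def graph_aut_def by (auto dest: bij_betwE)
    have "v \<in> verts G'" using verts_G' by simp
    then have "colours_match G' p' (tree_colouring T1') (sv' u) (sv' w)"
      using 3 uw sv' by (intro at_v) auto
    moreover have "\<forall>e\<in>edges G'. tree_colouring T1' (se' e) = tree_colouring T1' e"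
      using tree_colouring_se' by blast
    ultimately have "colours_match G' p' (tree_colouring T1') (sv' (sv' u)) (sv' (sv' w))"
      using colours_match_Z2_image[OF Z2_G' reflection_t p'_symmetric] uw sv'(1) by blast
    then show ?thesis using uw sv'(2) by simp
  qed
qed

lemma Cs_realisation_p': "Cs_realisation G' T1' T2' sv' p' t"
  unfolding Cs_realisation_def
  using inj_on_p' reflection_t p'_symmetric framework_colouring_p'
    tree_colouring_imp_realisation[OF T1'_T2'_partition] by blast

end

theorem proposition5p8:
  fixes G G' :: "('v, 'e) mgraph" and T1 T2 T1' T2' :: "'e set"
    and sv sv' :: "'v \<Rightarrow> 'v" and se se' :: "'e \<Rightarrow> 'e"
    and p :: "'v \<Rightarrow> real^2" and t :: "real^2 \<Rightarrow> real^2"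
  assumes "sym_two_tree_decomp G T1 T2 sv se"
    and "sym_two_tree_decomp G' T1' T2' sv' se'"
    and "sym_0_extension G T1 T2 sv se G' T1' T2' sv' se'"
    and "Cs_realisation G T1 T2 sv p t"
  shows "\<exists>p'. Cs_realisation G' T1' T2' sv' p' t \<and> (\<forall>w\<in>verts G. p' w = p w)"
proof -
  obtain v v1 v2 a b where "sym_0_extension_step G G' T1 T1' T2' sv sv' se' v v1 v2 a b"
    using sym_0_extension_step_exists[OF assms(1-3)] .
  then interpret sym_0_extension_step G G' T1 T1' T2' sv sv' se' v v1 v2 a b .
  have inj: "inj_on p (verts G)" and t: "coord_reflection t"
    and p_sym: "\<forall>w\<in>verts G. t (p w) = p (sv w)"
    and colouring: "framework_colouring G p (tree_colouring T1)"
    using assms(4) realisation_imp_tree_colouring unfolding Cs_realisation_def by auto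
  have "finite (verts G)" using multigraph_G unfolding multigraph_def by blast
  then obtain q where "q$1 \<noteq> 0" "q$2 \<noteq> 0" "\<forall>w\<in>verts G. \<bar>q$1\<bar> \<noteq> \<bar>p w $ 1\<bar>"
    "v1 = v2 \<Longrightarrow> dominant_coords (q - p v1) = {1, 2}"
    "v1 \<noteq> v2 \<Longrightarrow> dominant_coords (q - p v1) = {1}"
    "v1 \<noteq> v2 \<Longrightarrow> dominant_coords (q - p v2) = {2}"
    using exists_point_for_extension[OF _ inj v1_v2] by blast
  then interpret sym_0_extension_realisation G G' T1 T1' T2' sv sv' se' v v1 v2 a b p t q
    using inj colouring t p_sym by unfold_locales
  show ?thesis using Cs_realisation_p' p'_old by blast
qed

end
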